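(* Let $G$ be the final graph of the uncoordinated construction (described in the context) on a set $P\subset\mathbb{R}^d$ of $n$ points with parameter $s>1$, let $\alpha$ be the aspect ratio of $P$, and let $\mathcal{W}=\{(P_i,Q_i)\}_{i=1}^m$ be the corresponding greedy WSPD, i.e. one pair $(B_r(p),B_r(q))$ with $r=|pq|/(2s+2)$ for each edge $pq$ of $G$. Then each point $x\in P$ belongs to $P_i\cup Q_i$ for at most $O(s^d\lg\alpha)$ indices $i$, where the implied constant depends only on $d$.
   Context: Fix $d\ge 1$; $|xy|$ is Euclidean distance; $\lg$ is logarithm base 2; $B_r(p)=\{x\in P:|px|\le r\}$. The aspect ratio is $\alpha=\max_{u,v\in P}|uv|/\min_{u\ne v\in P}|uv|$. Uncoordinated construction: start with the graph $G$ on vertex set $P$ with no edges. Every ordered pair $(p,q)$ of distinct points of $P$ is processed exactly once, in an arbitrary order, one at a time. When $(p,q)$ is processed, the edge $pq$ is added to $G$ unless $G$ currently contains an edge whose endpoints can be labeled $p',q'$ with $|pp'|\le |p'q'|/(2s+2)$ and $|qq'|\le |p'q'|/(2s+2)$. $G$ is the graph after all pairs are processed. *)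

theory Defs
  imports "HOL-Analysis.Analysis"
begin

text \<open>An edge pq is stored as the unordered pair {p,q}.\<close>

definition covered :: "real \<Rightarrow> 'a::metric_space set set \<Rightarrow> 'a \<Rightarrow> 'a \<Rightarrow> bool" where
  "covered s E p q \<longleftrightarrow>
     (\<exists>p' q'. {p', q'} \<in> E \<and> dist p p' \<le> dist p' q' / (2 * s + 2)
                          \<and> dist q q' \<le> dist p' q' / (2 * s + 2))"

definition uncoord_step :: "real \<Rightarrow> 'a::metric_space set set \<Rightarrow> 'a \<times> 'a \<Rightarrow> 'a set set" where
  "uncoord_step s E pq =
     (if covered s E (fst pq) (snd pq) then E else insert {fst pq, snd pq} E)"

definition uncoord_graph :: "real \<Rightarrow> ('a::metric_space \<times> 'a) list \<Rightarrow> 'a set set" where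
  "uncoord_graph s ord = foldl (uncoord_step s) {} ord"

definition valid_order :: "'a set \<Rightarrow> ('a \<times> 'a) list \<Rightarrow> bool" where
  "valid_order P ord \<longleftrightarrow> distinct ord \<and> set ord = {(p, q). p \<in> P \<and> q \<in> P \<and> p \<noteq> q}"

definition ballP :: "'a::metric_space set \<Rightarrow> real \<Rightarrow> 'a \<Rightarrow> 'a set" where
  "ballP P r p = {x \<in> P. dist p x \<le> r}"

definition aspect_ratio :: "'a::metric_space set \<Rightarrow> real" where
  "aspect_ratio P =
     Max {dist u v | u v. u \<in> P \<and> v \<in> P} / Min {dist u v | u v. u \<in> P \<and> v \<in> P \<and> u \<noteq> v}"

definition wspd_count :: "'a::metric_space set \<Rightarrow> real \<Rightarrow> 'a set set \<Rightarrow> 'a \<Rightarrow> nat" where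
  "wspd_count P s G x =
     card {e \<in> G. \<exists>p q. e = {p, q} \<and>
             x \<in> ballP P (dist p q / (2 * s + 2)) p \<union> ballP P (dist p q / (2 * s + 2)) q}"

end

theory Submission
  imports Defs
begin

(*
  Each edge pq that the construction adds is not covered by an earlier edge, so any two edges
  are separated: the endpoints of one cannot both lie within the smaller of the two radii
  |pq|/(2s+2) of the endpoints of the other.  Orient every edge whose WSPD pair contains
  x as (p, q) with x \<in> B_r(p), and sort these oriented edges by the dyadic scale k with
  2^k m \<le> |pq| < 2^(k+1) m, where m is the minimum distance; there are at most 1 + lg \<alpha> scales.
  At scale k put \<rho> = 2^k m/(2s+2): then |xp| \<le> 2\<rho>, |xq| \<le> 2(2s+3)\<rho>, and two distinct
  oriented edges differ by at least \<rho> in one endpoint.  Hence the pairs of cells of a grid of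
  mesh \<rho>/d containing (p, q) are distinct, which leaves at most (6d)^d (22ds)^d oriented edges
  per scale.
*)

abbreviation wspd_radius :: "real \<Rightarrow> 'a::metric_space \<Rightarrow> 'a \<Rightarrow> real" where
  "wspd_radius s p q \<equiv> dist p q / (2 * s + 2)"

text \<open>Weaker than ``no edge is covered by an earlier one'', but symmetric in the two edges, so it
  is an invariant of the construction that does not depend on the insertion order.\<close>

definition separated_edges :: "real \<Rightarrow> 'a::metric_space set set \<Rightarrow> bool" where
  "separated_edges s E \<longleftrightarrow>
     (\<forall>p1 q1 p2 q2. {p1, q1} \<in> E \<longrightarrow> {p2, q2} \<in> E \<longrightarrow>
        dist p1 p2 \<le> min (wspd_radius s p1 q1) (wspd_radius s p2 q2) \<longrightarrow>
        dist q1 q2 \<le> min (wspd_radius s p1 q1) (wspd_radius s p2 q2) \<longrightarrow> {p1, q1} = {p2, q2})"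

lemma separated_edgesD:
  "\<lbrakk>separated_edges s E; {p1, q1} \<in> E; {p2, q2} \<in> E;
    dist p1 p2 \<le> min (wspd_radius s p1 q1) (wspd_radius s p2 q2);
    dist q1 q2 \<le> min (wspd_radius s p1 q1) (wspd_radius s p2 q2)\<rbrakk>
   \<Longrightarrow> {p1, q1} = {p2, q2}"
  unfolding separated_edges_def by (elim allE impE)

lemma coveredI:
  "\<lbrakk>{p', q'} \<in> E; dist p p' \<le> wspd_radius s p' q'; dist q q' \<le> wspd_radius s p' q'\<rbrakk>
   \<Longrightarrow> covered s E p q"
  unfolding covered_def by blast

lemma covered_commute:
  assumes "covered s E p q"
  shows "covered s E q p"
proof -
  from assms obtain p' q' where "{p', q'} \<in> E" "dist p p' \<le> wspd_radius s p' q'"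
    "dist q q' \<le> wspd_radius s p' q'"
    unfolding covered_def by blast
  then show ?thesis
    by (intro coveredI[of q' p']) (simp_all add: insert_commute dist_commute)
qed

lemma separated_edges_empty: "separated_edges s {}"
  by (simp add: separated_edges_def)

lemma separated_edges_insert:
  assumes sep: "separated_edges s E" and new: "\<not> covered s E a b"
  shows "separated_edges s (insert {a, b} E)"
  unfolding separated_edges_def
proof (intro allI impI)
  fix p1 q1 p2 q2
  assume e1: "{p1, q1} \<in> insert {a, b} E" and e2: "{p2, q2} \<in> insert {a, b} E"
    and d1: "dist p1 p2 \<le> min (wspd_radius s p1 q1) (wspd_radius s p2 q2)"
    and d2: "dist q1 q2 \<le> min (wspd_radius s p1 q1) (wspd_radius s p2 q2)"
  have not_covering: False if "{p, q} \<in> E" "{p', q'} = {a, b}"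
      "dist p p' \<le> wspd_radius s p q" "dist q q' \<le> wspd_radius s p q" for p q p' q'
  proof -
    have "covered s E p' q'"
      using that(1,3,4) by (intro coveredI) (auto simp: dist_commute)
    moreover from that(2) consider "p' = a" "q' = b" | "p' = b" "q' = a"
      by (auto simp: doubleton_eq_iff)
    ultimately show False
      using new covered_commute by metis
  qed
  consider "{p1, q1} \<in> E" "{p2, q2} \<in> E" | "{p1, q1} = {a, b}" | "{p2, q2} = {a, b}"
    using e1 e2 by blast
  then show "{p1, q1} = {p2, q2}"
  proof cases
    case 1
    show ?thesis by (rule separated_edgesD[OF sep 1 d1 d2])
  next
    case 2
    show ?thesis
    proof (rule ccontr)
      assume "{p1, q1} \<noteq> {p2, q2}"
      with 2 e2 have "{p2, q2} \<in> E" by auto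
      with 2 d1 d2 show False by (intro not_covering[of p2 q2 p1 q1]) (auto simp: dist_commute)
    qed
  next
    case 3
    show ?thesis
    proof (rule ccontr)
      assume "{p1, q1} \<noteq> {p2, q2}"
      with 3 e1 have "{p1, q1} \<in> E" by auto
      with 3 d1 d2 show False by (intro not_covering[of p1 q1 p2 q2]) auto
    qed
  qed
qed

lemma separated_edges_foldl_uncoord_step:
  "separated_edges s E \<Longrightarrow> separated_edges s (foldl (uncoord_step s) E ord)"
proof (induction ord arbitrary: E)
  case (Cons pq ord)
  have "separated_edges s (uncoord_step s E pq)"
    using Cons.prems separated_edges_insert[of s E "fst pq" "snd pq"]
    by (simp add: uncoord_step_def)
  then show ?case by (simp add: Cons.IH)
qed simp

lemma separated_edges_uncoord_graph: "separated_edges s (uncoord_graph s ord)"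
  by (simp add: uncoord_graph_def separated_edges_foldl_uncoord_step separated_edges_empty)

lemma edge_of_foldl_uncoord_step:
  "e \<in> foldl (uncoord_step s) E ord \<Longrightarrow> e \<in> E \<or> (\<exists>(p, q) \<in> set ord. e = {p, q})"
proof (induction ord arbitrary: E)
  case (Cons pq ord)
  then have "e \<in> uncoord_step s E pq \<or> (\<exists>(p, q) \<in> set ord. e = {p, q})"
    by simp
  moreover have "uncoord_step s E pq \<subseteq> insert {fst pq, snd pq} E"
    by (auto simp: uncoord_step_def)
  ultimately show ?case by (cases pq) auto
qed simp

lemma edge_of_uncoord_graph:
  assumes "valid_order P ord" and "e \<in> uncoord_graph s ord"
  obtains p q where "e = {p, q}" "p \<in> P" "q \<in> P" "p \<noteq> q"
proof -
  obtain p q where "(p, q) \<in> set ord" "e = {p, q}"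
    using edge_of_foldl_uncoord_step[of e s "{}" ord] assms(2) by (auto simp: uncoord_graph_def)
  with assms(1) show thesis
    by (intro that[of p q]) (auto simp: valid_order_def)
qed

definition grid_cell :: "real \<Rightarrow> 'a::euclidean_space \<Rightarrow> 'a \<Rightarrow> int" where
  "grid_cell h y = (\<lambda>b\<in>Basis. \<lfloor>(y \<bullet> b) / h\<rfloor>)"

definition grid_box :: "real \<Rightarrow> real \<Rightarrow> 'a::euclidean_space \<Rightarrow> ('a \<Rightarrow> int) set" where
  "grid_box h R x = (\<Pi>\<^sub>E b\<in>Basis. {\<lfloor>(x \<bullet> b - R) / h\<rfloor>..\<lfloor>(x \<bullet> b + R) / h\<rfloor>})"

lemma dist_less_if_grid_cell_eq:
  fixes y z :: "'a::euclidean_space"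
  assumes h: "h > 0" and eq: "grid_cell h y = grid_cell h z"
  shows "dist y z < real DIM('a) * h"
proof -
  have coord: "\<bar>(y - z) \<bullet> b\<bar> < h" if b: "b \<in> Basis" for b
  proof -
    have "\<lfloor>(y \<bullet> b) / h\<rfloor> = \<lfloor>(z \<bullet> b) / h\<rfloor>"
      using fun_cong[OF eq, of b] b by (simp add: grid_cell_def)
    then have "\<bar>(y \<bullet> b) / h - (z \<bullet> b) / h\<bar> < 1"
      by linarith
    then show ?thesis
      using h by (simp add: inner_diff_left abs_less_iff field_simps)
  qed
  have "dist y z \<le> (\<Sum>b\<in>Basis. \<bar>(y - z) \<bullet> b\<bar>)"
    unfolding dist_norm by (rule norm_le_l1)
  also have "\<dots> < (\<Sum>b\<in>(Basis::'a set). h)"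
    by (rule sum_strict_mono) (simp_all add: coord)
  finally show ?thesis by simp
qed

lemma grid_cell_in_grid_box:
  fixes x y :: "'a::euclidean_space"
  assumes h: "h > 0" and d: "dist x y \<le> R"
  shows "grid_cell h y \<in> grid_box h R x"
  unfolding grid_cell_def grid_box_def
proof (rule iffD2[OF restrict_PiE_iff], intro ballI)
  fix b :: 'a assume b: "b \<in> Basis"
  have "\<bar>x \<bullet> b - y \<bullet> b\<bar> \<le> R"
    using Basis_le_norm[OF b, of "x - y"] d by (simp add: inner_diff_left dist_norm)
  then have "(x \<bullet> b - R) / h \<le> (y \<bullet> b) / h" "(y \<bullet> b) / h \<le> (x \<bullet> b + R) / h"
    using h by (auto intro: divide_right_mono)
  then show "\<lfloor>(y \<bullet> b) / h\<rfloor> \<in> {\<lfloor>(x \<bullet> b - R) / h\<rfloor>..\<lfloor>(x \<bullet> b + R) / h\<rfloor>}"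
    by (auto intro: floor_mono)
qed

lemma card_floor_interval_le:
  assumes h: "h > 0" and R: "R \<ge> 0"
  shows "real (card {\<lfloor>(c - R) / h\<rfloor>..\<lfloor>(c + R) / h\<rfloor>}) \<le> 2 * R / h + 2"
proof -
  have "(c + R) / h - (c - R) / h = 2 * R / h"
    using h by (simp add: field_simps)
  moreover have "0 \<le> R / h" using h R by simp
  moreover have "\<lfloor>(c + R) / h\<rfloor> \<le> (c + R) / h" "(c - R) / h - 1 < \<lfloor>(c - R) / h\<rfloor>"
    by linarith+
  ultimately have "real (nat (\<lfloor>(c + R) / h\<rfloor> - \<lfloor>(c - R) / h\<rfloor> + 1)) \<le> 2 * R / h + 2"
    by linarith
  then show ?thesis by simp
qed

lemma card_grid_box_le:
  fixes x :: "'a::euclidean_space"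
  assumes h: "h > 0" and R: "R \<ge> 0"
  shows "real (card (grid_box h R x)) \<le> (2 * R / h + 2) ^ DIM('a)"
proof -
  have "real (card (grid_box h R x))
      = (\<Prod>b\<in>(Basis::'a set). real (card {\<lfloor>(x \<bullet> b - R) / h\<rfloor>..\<lfloor>(x \<bullet> b + R) / h\<rfloor>}))"
    by (simp add: grid_box_def card_PiE del: card_atLeastAtMost_int)
  also have "\<dots> \<le> (\<Prod>b\<in>(Basis::'a set). 2 * R / h + 2)"
    by (rule prod_mono) (simp add: card_floor_interval_le[OF h R] del: card_atLeastAtMost_int)
  finally show ?thesis by simp
qed

lemma card_separated_pairs_le:
  fixes x :: "'a::euclidean_space" and F :: "('a \<times> 'a) set"
  defines "D \<equiv> real DIM('a)"
  assumes \<rho>: "\<rho> > 0" and a: "a \<ge> 0" and b: "b \<ge> 0"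
    and near: "\<And>p q. (p, q) \<in> F \<Longrightarrow> dist x p \<le> a * \<rho> \<and> dist x q \<le> b * \<rho>"
    and apart: "\<And>p1 q1 p2 q2. \<lbrakk>(p1, q1) \<in> F; (p2, q2) \<in> F; dist p1 p2 < \<rho>; dist q1 q2 < \<rho>\<rbrakk>
                  \<Longrightarrow> (p1, q1) = (p2, q2)"
  shows "finite F \<and> real (card F) \<le> (2 * a * D + 2) ^ DIM('a) * (2 * b * D + 2) ^ DIM('a)"
proof -
  define h where "h = \<rho> / D"
  have D: "D > 0" by (simp add: D_def)
  have h: "h > 0" using \<rho> D by (simp add: h_def)
  have Dh: "D * h = \<rho>" using D by (simp add: h_def)
  define cells where "cells = (\<lambda>(p :: 'a, q :: 'a). (grid_cell h p, grid_cell h q :: 'a \<Rightarrow> int))"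
  define B where "B = grid_box h (a * \<rho>) x \<times> grid_box h (b * \<rho>) x"
  have close: "dist y z < \<rho>" if "grid_cell h y = grid_cell h z" for y z :: 'a
    using dist_less_if_grid_cell_eq[OF h that] Dh by (simp add: D_def)
  have "inj_on cells F"
  proof (rule inj_onI)
    fix z1 z2 assume "z1 \<in> F" "z2 \<in> F" "cells z1 = cells z2"
    then show "z1 = z2"
      using close apart by (cases z1; cases z2) (auto simp: cells_def)
  qed
  moreover have "cells ` F \<subseteq> B"
    using near by (auto simp: cells_def B_def intro!: grid_cell_in_grid_box[OF h])
  moreover have "finite B" by (simp add: B_def grid_box_def finite_PiE)
  ultimately have "finite F" "card F \<le> card B"
    by (blast intro: inj_on_finite card_inj_on_le)+
  moreover have "2 * (a * \<rho>) / h = 2 * a * D" "2 * (b * \<rho>) / h = 2 * b * D"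
    using \<rho> D by (simp_all add: h_def)
  then have "real (card B) \<le> (2 * a * D + 2) ^ DIM('a) * (2 * b * D + 2) ^ DIM('a)"
    unfolding B_def card_cartesian_product of_nat_mult
    using card_grid_box_le[OF h, of "a * \<rho>" x] card_grid_box_le[OF h, of "b * \<rho>" x] a b \<rho>
    by (intro mult_mono) simp_all
  ultimately show ?thesis by simp
qed

lemma dyadic_scale:
  fixes m d M :: real
  assumes m: "0 < m" and md: "m \<le> d" and dM: "d \<le> M"
  obtains k where "k \<le> nat \<lfloor>log 2 (M / m)\<rfloor>" "2 ^ k * m \<le> d" "d < 2 ^ (k + 1) * m"
proof
  define k where "k = nat \<lfloor>log 2 (d / m)\<rfloor>"
  have dm: "d / m \<ge> 1" using m md by simp
  then have "real_of_int \<lfloor>log 2 (d / m)\<rfloor> = real k"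
    by (simp add: k_def)
  then have "2 powr real k \<le> d / m \<and> d / m < 2 powr (real k + 1)"
    using floor_log_eq_powr_iff[of "d / m" 2 "\<lfloor>log 2 (d / m)\<rfloor>"] dm by simp
  then have "2 ^ k \<le> d / m" "d / m < 2 ^ (k + 1)"
    by (simp_all add: powr_add powr_realpow)
  then show "2 ^ k * m \<le> d" "d < 2 ^ (k + 1) * m"
    using m by (simp_all add: field_simps)
  have "log 2 (d / m) \<le> log 2 (M / m)"
    using dm dM m by (simp add: divide_right_mono)
  then show "k \<le> nat \<lfloor>log 2 (M / m)\<rfloor>"
    unfolding k_def by (intro nat_mono floor_mono)
qed

definition edges_near_at_scale ::
    "real \<Rightarrow> 'a::metric_space set set \<Rightarrow> real \<Rightarrow> 'a \<Rightarrow> nat \<Rightarrow> ('a \<times> 'a) set" where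
  "edges_near_at_scale s G m x k =
     {(p, q). {p, q} \<in> G \<and> dist p x \<le> wspd_radius s p q \<and>
              2 ^ k * m \<le> dist p q \<and> dist p q < 2 ^ (k + 1) * m}"

lemma edges_near_at_scale_dist_le:
  assumes e: "(p, q) \<in> edges_near_at_scale s G m x k" and s: "s \<ge> 0"
  defines "\<rho> \<equiv> 2 ^ k * m / (2 * s + 2)"
  shows "dist x p \<le> 2 * \<rho>" "dist x q \<le> 2 * (2 * s + 3) * \<rho>"
proof -
  have px: "dist p x \<le> wspd_radius s p q" and pq: "dist p q < 2 ^ (k + 1) * m"
    using e by (auto simp: edges_near_at_scale_def)
  have "wspd_radius s p q \<le> 2 ^ (k + 1) * m / (2 * s + 2)"
    using pq s by (intro divide_right_mono) auto
  then have r: "wspd_radius s p q \<le> 2 * \<rho>" by (simp add: \<rho>_def)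
  then show "dist x p \<le> 2 * \<rho>"
    using px by (simp add: dist_commute)
  have "dist x q \<le> wspd_radius s p q + dist p q"
    using px dist_triangle[of x q p] by (simp add: dist_commute)
  also have "\<dots> = (2 * s + 3) * wspd_radius s p q"
    using s by (simp add: field_simps)
  also have "\<dots> \<le> 2 * (2 * s + 3) * \<rho>"
    using mult_left_mono[OF r, of "2 * s + 3"] s by (simp add: mult_ac)
  finally show "dist x q \<le> 2 * (2 * s + 3) * \<rho>" .
qed

text \<open>Separation only forces the unordered edges to agree; the reversed orientation is excluded
  because \<rho> is smaller than the length of the edge.\<close>

lemma edges_near_at_scale_apart:
  assumes sep: "separated_edges s G" and s: "s \<ge> 0" and m: "m > 0"
    and e1: "(p1, q1) \<in> edges_near_at_scale s G m x k"
    and e2: "(p2, q2) \<in> edges_near_at_scale s G m x k"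
  defines "\<rho> \<equiv> 2 ^ k * m / (2 * s + 2)"
  assumes d1: "dist p1 p2 < \<rho>" and d2: "dist q1 q2 < \<rho>"
  shows "(p1, q1) = (p2, q2)"
proof -
  have \<rho>_le: "\<rho> \<le> wspd_radius s p q" if "(p, q) \<in> edges_near_at_scale s G m x k" for p q
    using that s by (auto simp: edges_near_at_scale_def \<rho>_def divide_right_mono)
  have "{p1, q1} = {p2, q2}"
    using e1 e2 d1 d2 \<rho>_le[OF e1] \<rho>_le[OF e2]
    by (intro separated_edgesD[OF sep]) (auto simp: edges_near_at_scale_def)
  moreover have "\<rho> < dist p1 q1"
  proof -
    have "2 ^ k * m \<le> dist p1 q1" "0 < 2 ^ k * m"
      using e1 m by (auto simp: edges_near_at_scale_def)
    then have "dist p1 q1 * 1 < dist p1 q1 * (2 * s + 2)"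
      using s by (intro mult_strict_left_mono) auto
    then have "wspd_radius s p1 q1 < dist p1 q1"
      using s by (simp add: divide_less_eq)
    then show ?thesis using \<rho>_le[OF e1] by linarith
  qed
  ultimately show ?thesis
    using d1 by (auto simp: doubleton_eq_iff)
qed

lemma card_edges_near_at_scale_le:
  fixes x :: "'a::euclidean_space"
  defines "D \<equiv> real DIM('a)"
  assumes sep: "separated_edges s G" and s: "s \<ge> 1" and m: "m > 0"
  shows "finite (edges_near_at_scale s G m x k) \<and>
         real (card (edges_near_at_scale s G m x k))
           \<le> (6 * D) ^ DIM('a) * (22 * D) ^ DIM('a) * s ^ DIM('a)"
proof -
  define \<rho> where "\<rho> = 2 ^ k * m / (2 * s + 2)"
  have \<rho>: "\<rho> > 0" using s m by (simp add: \<rho>_def)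
  have s0: "s \<ge> 0" using s by simp
  have packing: "finite (edges_near_at_scale s G m x k) \<and>
      real (card (edges_near_at_scale s G m x k))
        \<le> (2 * 2 * D + 2) ^ DIM('a) * (2 * (2 * (2 * s + 3)) * D + 2) ^ DIM('a)"
    unfolding D_def
  proof (rule card_separated_pairs_le[OF \<rho>])
    fix p q assume "(p, q) \<in> edges_near_at_scale s G m x k"
    then show "dist x p \<le> 2 * \<rho> \<and> dist x q \<le> 2 * (2 * s + 3) * \<rho>"
      using edges_near_at_scale_dist_le[OF _ s0] unfolding \<rho>_def by blast
  next
    fix p1 q1 p2 q2
    assume "(p1, q1) \<in> edges_near_at_scale s G m x k" "(p2, q2) \<in> edges_near_at_scale s G m x k"
      "dist p1 p2 < \<rho>" "dist q1 q2 < \<rho>"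
    then show "(p1, q1) = (p2, q2)"
      using edges_near_at_scale_apart[OF sep s0 m] unfolding \<rho>_def by blast
  qed (use s in auto)
  have D: "D \<ge> 1" by (simp add: D_def Suc_le_eq)
  moreover have "D \<le> D * s" using mult_left_mono[OF s, of D] D by simp
  moreover have "2 * (2 * (2 * s + 3)) * D + 2 = 8 * (D * s) + 12 * D + 2" "22 * D * s = 22 * (D * s)"
    by (simp_all add: algebra_simps)
  ultimately have "2 * 2 * D + 2 \<le> 6 * D" "2 * (2 * (2 * s + 3)) * D + 2 \<le> 22 * D * s"
    by linarith+
  then have bound: "(2 * 2 * D + 2) ^ DIM('a) * (2 * (2 * (2 * s + 3)) * D + 2) ^ DIM('a)
      \<le> (6 * D) ^ DIM('a) * (22 * D * s) ^ DIM('a)"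
    using s by (intro mult_mono power_mono) auto
  from packing bound show ?thesis by (simp add: power_mult_distrib mult.assoc)
qed

lemma wspd_pairs_containing_subset:
  assumes m: "0 < m"
    and edges: "\<And>e. e \<in> G \<Longrightarrow> \<exists>p q. e = {p, q} \<and> m \<le> dist p q \<and> dist p q \<le> M"
  shows "{e \<in> G. \<exists>p q. e = {p, q} \<and>
            x \<in> ballP P (wspd_radius s p q) p \<union> ballP P (wspd_radius s p q) q}
         \<subseteq> (\<lambda>(p, q). {p, q}) ` (\<Union>k\<le>nat \<lfloor>log 2 (M / m)\<rfloor>. edges_near_at_scale s G m x k)"
proof clarify
  fix p q assume e: "{p, q} \<in> G"
    and x: "x \<in> ballP P (wspd_radius s p q) p \<union> ballP P (wspd_radius s p q) q"
  obtain p' q' where pq': "{p', q'} = {p, q}" "dist p' x \<le> wspd_radius s p' q'"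
  proof -
    from x consider "dist p x \<le> wspd_radius s p q" | "dist q x \<le> wspd_radius s p q"
      by (auto simp: ballP_def)
    then show thesis
    proof cases
      case 1
      then show thesis by (intro that[of p q]) auto
    next
      case 2
      then show thesis by (intro that[of q p]) (auto simp: insert_commute dist_commute)
    qed
  qed
  obtain a b where "{p, q} = {a, b}" "m \<le> dist a b" "dist a b \<le> M"
    using edges[OF e] by blast
  then have "m \<le> dist p' q'" "dist p' q' \<le> M"
    using pq'(1) by (auto simp: doubleton_eq_iff dist_commute)
  then obtain k where "k \<le> nat \<lfloor>log 2 (M / m)\<rfloor>" "2 ^ k * m \<le> dist p' q'" "dist p' q' < 2 ^ (k + 1) * m"
    using dyadic_scale[OF m] by blast
  then have "(p', q') \<in> (\<Union>k\<le>nat \<lfloor>log 2 (M / m)\<rfloor>. edges_near_at_scale s G m x k)"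
    using e pq' by (auto simp: edges_near_at_scale_def)
  then show "{p, q} \<in> (\<lambda>(p, q). {p, q}) ` (\<Union>k\<le>nat \<lfloor>log 2 (M / m)\<rfloor>. edges_near_at_scale s G m x k)"
    using pq'(1) by (intro image_eqI[where x = "(p', q')"]) auto
qed

lemma wspd_count_le:
  fixes G :: "'a::euclidean_space set set"
  defines "D \<equiv> real DIM('a)"
  assumes sep: "separated_edges s G" and s: "s \<ge> 1" and m: "0 < m"
    and edges: "\<And>e. e \<in> G \<Longrightarrow> \<exists>p q. e = {p, q} \<and> m \<le> dist p q \<and> dist p q \<le> M"
  shows "real (wspd_count P s G x)
           \<le> real (nat \<lfloor>log 2 (M / m)\<rfloor> + 1) * ((6 * D) ^ DIM('a) * (22 * D) ^ DIM('a) * s ^ DIM('a))"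
proof -
  define K where "K = nat \<lfloor>log 2 (M / m)\<rfloor>"
  define N where "N = edges_near_at_scale s G m x"
  have N: "finite (N k)" "real (card (N k)) \<le> (6 * D) ^ DIM('a) * (22 * D) ^ DIM('a) * s ^ DIM('a)" for k
    using card_edges_near_at_scale_le[OF sep s m, of x k] by (simp_all add: N_def D_def)
  have "wspd_count P s G x \<le> card ((\<lambda>(p, q). {p, q}) ` (\<Union>k\<le>K. N k))"
    unfolding wspd_count_def K_def N_def
    by (rule card_mono[OF _ wspd_pairs_containing_subset[OF m edges]]) (simp add: N(1)[unfolded N_def])
  also have "\<dots> \<le> card (\<Union>k\<le>K. N k)"
    using N(1) by (intro card_image_le) simp
  also have "\<dots> \<le> (\<Sum>k\<le>K. card (N k))"
    by (intro card_UN_le) simp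
  finally have "real (wspd_count P s G x) \<le> real (\<Sum>k\<le>K. card (N k))"
    by (rule of_nat_mono)
  also have "\<dots> = (\<Sum>k\<le>K. real (card (N k)))"
    by (rule of_nat_sum)
  also have "\<dots> \<le> (\<Sum>k\<le>K. (6 * D) ^ DIM('a) * (22 * D) ^ DIM('a) * s ^ DIM('a))"
    by (intro sum_mono N(2))
  finally show ?thesis by (simp add: K_def)
qed

lemma aspect_ratio_witnesses:
  assumes "finite P" "card P \<ge> 2"
  obtains m M where "0 < m" "m \<le> M"
    "\<And>p q. \<lbrakk>p \<in> P; q \<in> P; p \<noteq> q\<rbrakk> \<Longrightarrow> m \<le> dist p q"
    "\<And>p q. \<lbrakk>p \<in> P; q \<in> P\<rbrakk> \<Longrightarrow> dist p q \<le> M"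
    "aspect_ratio P = M / m"
proof
  define M where "M = Max {dist u v | u v. u \<in> P \<and> v \<in> P}"
  define m where "m = Min {dist u v | u v. u \<in> P \<and> v \<in> P \<and> u \<noteq> v}"
  have fin: "finite {dist u v | u v. u \<in> P \<and> v \<in> P}"
    using assms(1) by (intro finite_image_set2) auto
  then have fin': "finite {dist u v | u v. u \<in> P \<and> v \<in> P \<and> u \<noteq> v}"
    by (rule rev_finite_subset) auto
  obtain u v where uv: "u \<in> P" "v \<in> P" "u \<noteq> v"
    using assms card_le_Suc0_iff_eq[OF assms(1)] by fastforce
  show min: "m \<le> dist p q" if "p \<in> P" "q \<in> P" "p \<noteq> q" for p q
    unfolding m_def using fin' that by (intro Min_le) auto
  show max: "dist p q \<le> M" if "p \<in> P" "q \<in> P" for p q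
    unfolding M_def using fin that by (intro Max_ge) auto
  have "m \<in> {dist u v | u v. u \<in> P \<and> v \<in> P \<and> u \<noteq> v}"
    unfolding m_def using fin' uv by (intro Min_in) auto
  then show "0 < m" by auto
  show "m \<le> M" using min[OF uv] max[OF uv(1,2)] by linarith
  show "aspect_ratio P = M / m" by (simp add: aspect_ratio_def M_def m_def)
qed

theorem theorem14:
  "\<exists>C::real. \<forall>(P::'a::euclidean_space set) (s::real) ord x.
     finite P \<longrightarrow> card P \<ge> 2 \<longrightarrow> s > 1 \<longrightarrow> valid_order P ord \<longrightarrow> x \<in> P \<longrightarrow>
     real (wspd_count P s (uncoord_graph s ord) x)
       \<le> C * s ^ DIM('a) * (1 + log 2 (aspect_ratio P))"
proof (intro exI[of _ "(6 * real DIM('a)) ^ DIM('a) * (22 * real DIM('a)) ^ DIM('a)"] allI impI)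
  fix P :: "'a set" and s :: real and ord x
  assume P: "finite P" "card P \<ge> 2" and s: "s > 1" and ord: "valid_order P ord"
  define X where "X = (6 * real DIM('a)) ^ DIM('a) * (22 * real DIM('a)) ^ DIM('a) * s ^ DIM('a)"
  obtain m M where m: "0 < m" "m \<le> M"
    and dist_ge: "\<And>p q. \<lbrakk>p \<in> P; q \<in> P; p \<noteq> q\<rbrakk> \<Longrightarrow> m \<le> dist p q"
    and dist_le: "\<And>p q. \<lbrakk>p \<in> P; q \<in> P\<rbrakk> \<Longrightarrow> dist p q \<le> M"
    and ratio: "aspect_ratio P = M / m"
    using aspect_ratio_witnesses[OF P] by blast
  have "\<exists>p q. e = {p, q} \<and> m \<le> dist p q \<and> dist p q \<le> M" if e: "e \<in> uncoord_graph s ord" for e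
  proof -
    obtain p q where "e = {p, q}" "p \<in> P" "q \<in> P" "p \<noteq> q"
      using edge_of_uncoord_graph[OF ord e] .
    with dist_ge dist_le show ?thesis by blast
  qed
  with s m have "real (wspd_count P s (uncoord_graph s ord) x) \<le> real (nat \<lfloor>log 2 (M / m)\<rfloor> + 1) * X"
    unfolding X_def by (intro wspd_count_le separated_edges_uncoord_graph) auto
  also have "\<dots> \<le> (1 + log 2 (aspect_ratio P)) * X"
  proof (rule mult_right_mono)
    have "log 2 (M / m) \<ge> 0" using m by simp
    then show "real (nat \<lfloor>log 2 (M / m)\<rfloor> + 1) \<le> 1 + log 2 (aspect_ratio P)"
      unfolding ratio by linarith
    show "X \<ge> 0" using s by (simp add: X_def)
  qed
  finally show "real (wspd_count P s (uncoord_graph s ord) x)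
      \<le> (6 * real DIM('a)) ^ DIM('a) * (22 * real DIM('a)) ^ DIM('a) * s ^ DIM('a) * (1 + log 2 (aspect_ratio P))"
    by (simp add: X_def mult.commute)
qed

end
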